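(* In the setting of the D2EAL algorithm (without periodic reset) described in the context, fix an agent $i$ with $d_i(0)\ge2$ and assume $\Omega_i(t)\subseteq\Omega_i(t-1)$ for all $t=1,\dots,T$. With $\eta_\alpha>0$ arbitrary and the choice $\eta_w=\sqrt{8\log d_i(0)/T}$, $$R_i^S(T):=\hat L_{T,i}-\min_{j\in\Lambda_i(T)}\bar L_{T,j}\le\sqrt{\tfrac{T}{2}\log d_i(0)}.$$
   Context: Setup. There are $N\ge 1$ agents indexed by $i\in[N]$ and a horizon $T\ge1$. The outcome space $\mathcal Y$ and action space $\mathcal A$ are convex subsets of $\mathbb R^n$. The loss $l:\mathcal A\times\mathcal Y\to[0,1]$ is convex in its first argument. The target sequence $y_1,\dots,y_T\in\mathcal Y$ is arbitrary. For each agent $i$ and each $t\ge1$, an "expert" supplies an arbitrary prediction $f_{t,i}\in\mathcal A$ of $y_t$ (available at time $t-1$). Agents communicate over a time-varying undirected graph; $\Omega_i(t)$ is the set of neighbours of agent $i$ at time $t$, $\Lambda_i(t):=\Omega_i(t)\cup\{i\}$ and $d_i(t):=|\Lambda_i(t)|$. D2EAL (without periodic reset). Initialize $\hat f_{0,i}=f_{1,i}$, $\hat\alpha_i(0)=\hat\alpha'_i(0)=\hat w_{ii}(0)=1$ for all $i$. For $t=0,1,\dots,T-1$, each agent $i$ computes: $\alpha_i(t)=\hat\alpha_i(t)/(\hat\alpha_i(t)+\hat\alpha'_i(t))$; individual prediction $\bar f_{t+1,i}=\alpha_i(t)f_{t+1,i}+(1-\alpha_i(t))\hat f_{t,i}$;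 social weights $w_{ij}(t)=\hat w_{jj}(t)/\sum_{j'\in\Lambda_i(t)}\hat w_{j'j'}(t)$ for $j\in\Lambda_i(t)$ and $w_{ij}(t)=0$ otherwise; social prediction $\hat f_{t+1,i}=\sum_{j\in\Lambda_i(t)}w_{ij}(t)\bar f_{t+1,j}$. After $y_{t+1}$ is revealed, define the losses $l_{t+1,i}=l(f_{t+1,i},y_{t+1})$, $\hat l^-_{t+1,i}=l(\hat f_{t,i},y_{t+1})$, $\bar l_{t+1,i}=l(\bar f_{t+1,i},y_{t+1})$, $\hat l_{t+1,i}=l(\hat f_{t+1,i},y_{t+1})$, and update $\hat\alpha_i(t+1)=\hat\alpha_i(t)e^{-\eta_\alpha l_{t+1,i}}$, $\hat\alpha'_i(t+1)=\hat\alpha'_i(t)e^{-\eta_\alpha \hat l^-_{t+1,i}}$, $\hat w_{ii}(t+1)=\hat w_{ii}(t)e^{-\eta_w\bar l_{t+1,i}}$. Cumulative losses: $L_{T,i}=\sum_{t=1}^T l_{t,i}$, $\hat L^-_{T,i}=\sum_{t=1}^T\hat l^-_{t,i}$, $\bar L_{T,i}=\sum_{t=1}^T\bar l_{t,i}$, $\hat L_{T,i}=\sum_{t=1}^T\hat l_{t,i}$. *)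

theory Defs
  imports "HOL-Analysis.Analysis"
begin

text \<open>Agents are natural numbers i < N.  Omega i t is the neighbour set of agent i at time t.
  f t i is the expert prediction of agent i for y t (t \<ge> 1), l is the loss,
  ea = eta_alpha, ew = eta_w.\<close>

definition Lam :: "(nat \<Rightarrow> nat \<Rightarrow> nat set) \<Rightarrow> nat \<Rightarrow> nat \<Rightarrow> nat set" where
  "Lam Omega i t = insert i (Omega i t)"

definition deg :: "(nat \<Rightarrow> nat \<Rightarrow> nat set) \<Rightarrow> nat \<Rightarrow> nat \<Rightarrow> nat" where
  "deg Omega i t = card (Lam Omega i t)"

text \<open>State at time t: (alpha_hat, alpha'_hat, w_hat (diagonal), f_hat_t).\<close>
fun d2eal_state ::
  "(nat \<Rightarrow> nat \<Rightarrow> nat set) \<Rightarrow> (nat \<Rightarrow> nat \<Rightarrow> 'a::real_vector) \<Rightarrow> (nat \<Rightarrow> 'a)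
   \<Rightarrow> ('a \<Rightarrow> 'a \<Rightarrow> real) \<Rightarrow> real \<Rightarrow> real \<Rightarrow> nat
   \<Rightarrow> (nat \<Rightarrow> real) \<times> (nat \<Rightarrow> real) \<times> (nat \<Rightarrow> real) \<times> (nat \<Rightarrow> 'a)" where
  "d2eal_state Omega f y l ea ew 0 = ((\<lambda>i. 1), (\<lambda>i. 1), (\<lambda>i. 1), (\<lambda>i. f 1 i))"
| "d2eal_state Omega f y l ea ew (Suc t) =
     (case d2eal_state Omega f y l ea ew t of (ah, ah', wh, fh) \<Rightarrow>
       let al = (\<lambda>i. ah i / (ah i + ah' i));
           fb = (\<lambda>i. al i *\<^sub>R f (Suc t) i + (1 - al i) *\<^sub>R fh i);
           fh_new = (\<lambda>i. \<Sum>j\<in>Lam Omega i t.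
                         (wh j / (\<Sum>j'\<in>Lam Omega i t. wh j')) *\<^sub>R fb j)
       in ((\<lambda>i. ah i * exp (- ea * l (f (Suc t) i) (y (Suc t)))),
           (\<lambda>i. ah' i * exp (- ea * l (fh i) (y (Suc t)))),
           (\<lambda>i. wh i * exp (- ew * l (fb i) (y (Suc t)))),
           fh_new))"

definition alpha_hat where "alpha_hat Omega f y l ea ew t i = fst (d2eal_state Omega f y l ea ew t) i"
definition alpha_hat' where "alpha_hat' Omega f y l ea ew t i = fst (snd (d2eal_state Omega f y l ea ew t)) i"
definition w_hat where "w_hat Omega f y l ea ew t i = fst (snd (snd (d2eal_state Omega f y l ea ew t))) i"

definition f_hat where "f_hat Omega f y l ea ew t i = snd (snd (snd (d2eal_state Omega f y l ea ew t))) i"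

definition alpha :: "(nat \<Rightarrow> nat \<Rightarrow> nat set) \<Rightarrow> (nat \<Rightarrow> nat \<Rightarrow> 'a::real_vector) \<Rightarrow> (nat \<Rightarrow> 'a)
   \<Rightarrow> ('a \<Rightarrow> 'a \<Rightarrow> real) \<Rightarrow> real \<Rightarrow> real \<Rightarrow> nat \<Rightarrow> nat \<Rightarrow> real" where
  "alpha Omega f y l ea ew t i =
     alpha_hat Omega f y l ea ew t i / (alpha_hat Omega f y l ea ew t i + alpha_hat' Omega f y l ea ew t i)"

text \<open>Individual prediction \<open>\<bar>f_{t+1,i}\<close>; meaningful for time index \<open>\<ge> 1\<close>.\<close>
definition f_bar where
  "f_bar Omega f y l ea ew t i =
     alpha Omega f y l ea ew (t - 1) i *\<^sub>R f t i
     + (1 - alpha Omega f y l ea ew (t - 1) i) *\<^sub>R f_hat Omega f y l ea ew (t - 1) i"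

definition L_hat where
  "L_hat Omega f y l ea ew T i = (\<Sum>t=1..T. l (f_hat Omega f y l ea ew t i) (y t))"

definition L_bar where
  "L_bar Omega f y l ea ew T i = (\<Sum>t=1..T. l (f_bar Omega f y l ea ew t i) (y t))"

end

(*
  The social weights w_j(t) = exp (- ew * Lbar_{t,j}) are exponential weights on the individual
  cumulative losses, and the social prediction fhat_{t+1,i} is the corresponding weighted average
  of the individual predictions over Lam_i(t).  So the potential
  Phi_t = sum over j in Lam_i(t) of w_j(t+1) obeys the classical estimate for exponentially weighted
  averages: convexity of the loss and Hoeffding's lemma show that each round multiplies it by at
  most exp (- ew * lhat_{t+1,i} + ew^2/8), and shrinking neighbourhoods only drop positive terms.
  Thus exp (- ew * min_j Lbar_{T,j}) <= Phi_{T-1} <= d_i(0) * exp (- ew * Lhat_{T,i} + T ew^2/8),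
  i.e. the regret is at most ln d_i(0) / ew + T ew / 8, and the chosen ew balances the two terms.
*)
theory Submission
  imports Defs "HOL-Probability.Hoeffding"
begin

lemma exp_neg_mult_le_chord:
  fixes x h :: real
  assumes "0 \<le> x" "x \<le> 1"
  shows "exp (- h * x) \<le> 1 - x + x * exp (- h)"
  using convex_onD[OF exp_convex, of x 0 "- h"] assms by (simp add: algebra_simps)

lemma hoeffding_bernoulli_bound:
  fixes m h :: real
  assumes "0 \<le> m" "m \<le> 1" "0 \<le> h"
  shows "1 - m + m * exp (- h) \<le> exp (- h * m + h\<^sup>2 / 8)"
proof -
  have pos: "0 < 1 + (1 - m) * (exp h - 1)"
    using assms by (intro add_pos_nonneg mult_nonneg_nonneg) auto
  have "ln (1 + (1 - m) * (exp h - 1)) \<le> h * (1 - m) + h\<^sup>2 / 8"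
    using Hoeffdings_lemma_aux[of h "1 - m"] assms by simp
  then have "1 + (1 - m) * (exp h - 1) \<le> exp (h * (1 - m) + h\<^sup>2 / 8)"
    using pos by (metis exp_le_cancel_iff exp_ln)
  then have "exp (- h) * (1 + (1 - m) * (exp h - 1)) \<le> exp (- h) * exp (h * (1 - m) + h\<^sup>2 / 8)"
    by simp
  moreover have "exp (- h) * (1 + (1 - m) * (exp h - 1)) = 1 - m + m * exp (- h)"
    by (simp add: exp_minus field_simps)
  moreover have "exp (- h) * exp (h * (1 - m) + h\<^sup>2 / 8) = exp (- h * m + h\<^sup>2 / 8)"
    by (simp add: mult_exp_exp algebra_simps)
  ultimately show ?thesis
    by simp
qed

lemma hoeffding_lemma_finite:
  fixes p x :: "'a \<Rightarrow> real" and h :: real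
  assumes "finite A" "\<And>j. j \<in> A \<Longrightarrow> 0 \<le> p j" "(\<Sum>j\<in>A. p j) = 1"
    and "\<And>j. j \<in> A \<Longrightarrow> 0 \<le> x j \<and> x j \<le> 1" "0 \<le> h"
  shows "(\<Sum>j\<in>A. p j * exp (- h * x j)) \<le> exp (- h * (\<Sum>j\<in>A. p j * x j) + h\<^sup>2 / 8)"
proof -
  define m where "m = (\<Sum>j\<in>A. p j * x j)"
  have "0 \<le> m"
    unfolding m_def using assms by (intro sum_nonneg) simp
  have "m \<le> (\<Sum>j\<in>A. p j)"
    unfolding m_def using assms by (intro sum_mono) (simp add: mult_left_le)
  then have "m \<le> 1"
    using assms by simp
  have "(\<Sum>j\<in>A. p j * exp (- h * x j)) \<le> (\<Sum>j\<in>A. p j * (1 - x j + x j * exp (- h)))"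
    using assms exp_neg_mult_le_chord by (intro sum_mono mult_left_mono) auto
  also have "\<dots> = 1 - m + m * exp (- h)"
    using assms
    by (simp add: m_def algebra_simps sum.distrib sum_subtractf sum_distrib_left mult.left_commute)
  also have "\<dots> \<le> exp (- h * m + h\<^sup>2 / 8)"
    using hoeffding_bernoulli_bound \<open>0 \<le> m\<close> \<open>m \<le> 1\<close> assms by blast
  finally show ?thesis
    unfolding m_def .
qed

lemma exp_weights_step:
  fixes w :: "'i \<Rightarrow> real" and z :: "'i \<Rightarrow> 'a::real_vector" and g :: "'a \<Rightarrow> real"
  assumes "finite A" "A \<noteq> {}" "\<And>j. j \<in> A \<Longrightarrow> 0 < w j" "\<And>j. j \<in> A \<Longrightarrow> z j \<in> C"
    and "convex_on C g" "\<And>a. a \<in> C \<Longrightarrow> 0 \<le> g a \<and> g a \<le> 1" "0 \<le> h"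
  shows "(\<Sum>j\<in>A. w j * exp (- h * g (z j)))
    \<le> exp (- h * g (\<Sum>j\<in>A. (w j / (\<Sum>k\<in>A. w k)) *\<^sub>R z j) + h\<^sup>2 / 8) * (\<Sum>j\<in>A. w j)"
proof -
  define W where "W = (\<Sum>k\<in>A. w k)"
  define p where "p j = w j / W" for j
  have "0 < W"
    unfolding W_def using assms by (intro sum_pos) auto
  then have p_nonneg: "0 \<le> p j" if "j \<in> A" for j
    using assms that by (simp add: p_def less_imp_le)
  have p_sum: "(\<Sum>j\<in>A. p j) = 1"
    using \<open>0 < W\<close> by (simp add: p_def W_def flip: sum_divide_distrib)
  have "(\<Sum>j\<in>A. w j * exp (- h * g (z j))) = W * (\<Sum>j\<in>A. p j * exp (- h * g (z j)))"
    using \<open>0 < W\<close> by (simp add: p_def sum_distrib_left)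
  also have "\<dots> \<le> W * exp (- h * (\<Sum>j\<in>A. p j * g (z j)) + h\<^sup>2 / 8)"
    using \<open>0 < W\<close> assms p_nonneg p_sum
    by (intro mult_left_mono hoeffding_lemma_finite) auto
  also have "\<dots> \<le> W * exp (- h * g (\<Sum>j\<in>A. p j *\<^sub>R z j) + h\<^sup>2 / 8)"
    using \<open>0 < W\<close> assms p_nonneg p_sum
    by (intro mult_left_mono exp_mono add_right_mono mult_left_mono_neg convex_on_sum) auto
  finally show ?thesis
    by (simp add: W_def p_def mult.commute)
qed

lemma exp_potential_imp_regret:
  fixes \<eta> d L M n :: real
  assumes "0 < \<eta>" "0 < d" "exp (- \<eta> * M) \<le> d * exp (- \<eta> * L + n * \<eta>\<^sup>2 / 8)"
  shows "L - M \<le> ln d / \<eta> + n * \<eta> / 8"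
proof -
  have "d * exp (- \<eta> * L + n * \<eta>\<^sup>2 / 8) = exp (ln d - \<eta> * L + n * \<eta>\<^sup>2 / 8)"
    using \<open>0 < d\<close> by (simp add: exp_add exp_diff)
  then have "- \<eta> * M \<le> ln d - \<eta> * L + n * \<eta>\<^sup>2 / 8"
    using assms(3) by simp
  then have "\<eta> * (L - M) \<le> ln d + n * \<eta>\<^sup>2 / 8"
    by (simp add: algebra_simps)
  then show ?thesis
    using assms by (simp add: field_simps power2_eq_square)
qed

lemma tuned_rate_sum_eq:
  fixes c n :: real
  assumes "0 < c" "0 < n"
  shows "c / sqrt (8 * c / n) + n * sqrt (8 * c / n) / 8 = sqrt (n / 2 * c)"
proof -
  define \<eta> where "\<eta> = sqrt (8 * c / n)"
  have "0 < \<eta>" and \<eta>_sq: "\<eta>\<^sup>2 = 8 * c / n"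
    using assms by (simp_all add: \<eta>_def)
  then have "c / \<eta> + n * \<eta> / 8 = 2 * c / \<eta>"
    using assms by (simp add: field_simps power2_eq_square)
  also have "\<dots> = sqrt (n / 2 * c)"
  proof (rule real_sqrt_unique[symmetric])
    show "(2 * c / \<eta>)\<^sup>2 = n / 2 * c"
      unfolding power_divide \<eta>_sq using assms by (simp add: field_simps power2_eq_square)
    show "0 \<le> 2 * c / \<eta>"
      using assms \<open>0 < \<eta>\<close> by simp
  qed
  finally show ?thesis
    unfolding \<eta>_def .
qed

lemma Lam_not_empty: "Lam Omega i t \<noteq> {}"
  by (simp add: Lam_def)

locale d2eal_run =
  fixes Omega :: "nat \<Rightarrow> nat \<Rightarrow> nat set" and f :: "nat \<Rightarrow> nat \<Rightarrow> 'a::real_vector"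
    and y :: "nat \<Rightarrow> 'a" and l :: "'a \<Rightarrow> 'a \<Rightarrow> real" and ea ew :: real
begin

abbreviation "ah \<equiv> alpha_hat Omega f y l ea ew"
abbreviation "ah' \<equiv> alpha_hat' Omega f y l ea ew"
abbreviation "wh \<equiv> w_hat Omega f y l ea ew"
abbreviation "fh \<equiv> f_hat Omega f y l ea ew"
abbreviation "fb \<equiv> f_bar Omega f y l ea ew"
abbreviation "al \<equiv> alpha Omega f y l ea ew"
abbreviation "Lh \<equiv> L_hat Omega f y l ea ew"
abbreviation "Lb \<equiv> L_bar Omega f y l ea ew"

lemma initial_state: "ah 0 i = 1" "ah' 0 i = 1" "wh 0 i = 1" "fh 0 i = f 1 i"
  by (simp_all add: alpha_hat_def alpha_hat'_def w_hat_def f_hat_def)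

lemma alpha_hat_Suc: "ah (Suc t) i = ah t i * exp (- ea * l (f (Suc t) i) (y (Suc t)))"
  by (cases "d2eal_state Omega f y l ea ew t") (simp add: alpha_hat_def Let_def)

lemma alpha_hat'_Suc: "ah' (Suc t) i = ah' t i * exp (- ea * l (fh t i) (y (Suc t)))"
  by (cases "d2eal_state Omega f y l ea ew t") (simp add: alpha_hat'_def f_hat_def Let_def)

lemma w_hat_Suc: "wh (Suc t) i = wh t i * exp (- ew * l (fb (Suc t) i) (y (Suc t)))"
  by (cases "d2eal_state Omega f y l ea ew t")
    (simp add: w_hat_def f_bar_def alpha_def alpha_hat_def alpha_hat'_def f_hat_def Let_def)

lemma f_hat_Suc:
  "fh (Suc t) i = (\<Sum>j\<in>Lam Omega i t. (wh t j / (\<Sum>k\<in>Lam Omega i t. wh t k)) *\<^sub>R fb (Suc t) j)"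
  by (cases "d2eal_state Omega f y l ea ew t")
    (simp add: w_hat_def f_bar_def alpha_def alpha_hat_def alpha_hat'_def f_hat_def Let_def)

lemma f_bar_Suc: "fb (Suc t) i = al t i *\<^sub>R f (Suc t) i + (1 - al t i) *\<^sub>R fh t i"
  by (simp add: f_bar_def)

lemma weights_pos: "0 < ah t i" "0 < ah' t i" "0 < wh t i"
  by (induction t) (simp_all add: initial_state alpha_hat_Suc alpha_hat'_Suc w_hat_Suc)

lemma alpha_bounds: "0 \<le> al t i" "al t i \<le> 1"
  using weights_pos[of t i] by (simp_all add: alpha_def)

lemma w_hat_eq_exp_L_bar: "wh t j = exp (- ew * Lb t j)"
  by (induction t)
    (simp_all add: initial_state w_hat_Suc L_bar_def sum.cl_ivl_Suc mult_exp_exp algebra_simps)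

end

locale d2eal = d2eal_run +
  fixes N :: nat and Acts Ys :: "'a set"
  assumes convex_Acts: "convex Acts"
    and loss_bounded: "\<And>a b. a \<in> Acts \<Longrightarrow> b \<in> Ys \<Longrightarrow> 0 \<le> l a b \<and> l a b \<le> 1"
    and loss_convex: "\<And>b. b \<in> Ys \<Longrightarrow> convex_on Acts (\<lambda>a. l a b)"
    and outcome_in_Ys: "\<And>t. 1 \<le> t \<Longrightarrow> y t \<in> Ys"
    and expert_in_Acts: "\<And>t j. 1 \<le> t \<Longrightarrow> j < N \<Longrightarrow> f t j \<in> Acts"
    and neighbours_subset: "\<And>j t. j < N \<Longrightarrow> Omega j t \<subseteq> {..<N} - {j}"
begin

lemma Lam_subset: "j < N \<Longrightarrow> Lam Omega j t \<subseteq> {..<N}"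
  using neighbours_subset[of j t] by (auto simp: Lam_def)

lemma finite_Lam: "j < N \<Longrightarrow> finite (Lam Omega j t)"
  using Lam_subset finite_subset by blast

lemma f_bar_in_Acts: "fh t j \<in> Acts \<Longrightarrow> j < N \<Longrightarrow> fb (Suc t) j \<in> Acts"
  unfolding f_bar_Suc using convexD_alt[OF convex_Acts _ expert_in_Acts] alpha_bounds
  by (simp add: algebra_simps)

lemma f_hat_in_Acts: "j < N \<Longrightarrow> fh t j \<in> Acts"
proof (induction t arbitrary: j)
  case 0
  then show ?case
    using expert_in_Acts by (simp add: initial_state)
next
  case (Suc t)
  have "0 < (\<Sum>k\<in>Lam Omega j t. wh t k)"
    using finite_Lam[OF Suc.prems] weights_pos Lam_not_empty by (intro sum_pos) auto
  moreover have "fb (Suc t) k \<in> Acts" if "k \<in> Lam Omega j t" for k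
    using that Lam_subset[OF Suc.prems] Suc.IH f_bar_in_Acts by blast
  ultimately show ?case
    unfolding f_hat_Suc using finite_Lam[OF Suc.prems] weights_pos
    by (intro convex_sum[OF _ convex_Acts])
      (auto simp: less_imp_le simp flip: sum_divide_distrib)
qed

lemma potential_step:
  assumes "0 \<le> ew" "i < N"
  shows "(\<Sum>j\<in>Lam Omega i t. wh (Suc t) j)
    \<le> exp (- ew * l (fh (Suc t) i) (y (Suc t)) + ew\<^sup>2 / 8) * (\<Sum>j\<in>Lam Omega i t. wh t j)"
proof -
  have "fb (Suc t) j \<in> Acts" if "j \<in> Lam Omega i t" for j
    using that Lam_subset[OF assms(2)] f_bar_in_Acts f_hat_in_Acts by blast
  then show ?thesis
    unfolding w_hat_Suc f_hat_Suc
    using assms finite_Lam Lam_not_empty weights_pos loss_convex loss_bounded outcome_in_Ys[of "Suc t"]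
    by (intro exp_weights_step[where C = Acts and g = "\<lambda>a. l a (y (Suc t))"]) auto
qed

lemma potential_bound:
  assumes "0 \<le> ew" "i < N" and shrinking: "\<And>s. s < t \<Longrightarrow> Lam Omega i (Suc s) \<subseteq> Lam Omega i s"
  shows "(\<Sum>j\<in>Lam Omega i t. wh (Suc t) j)
    \<le> deg Omega i 0 * exp (- ew * Lh (Suc t) i + Suc t * ew\<^sup>2 / 8)"
  using shrinking
proof (induction t)
  case 0
  have "(\<Sum>j\<in>Lam Omega i 0. wh 0 j) = deg Omega i 0"
    by (simp add: initial_state deg_def)
  then show ?case
    using potential_step[OF assms(1,2), of 0] by (simp add: L_hat_def mult.commute)
next
  case (Suc t)
  let ?step = "exp (- ew * l (fh (Suc (Suc t)) i) (y (Suc (Suc t))) + ew\<^sup>2 / 8)"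
  have "(\<Sum>j\<in>Lam Omega i (Suc t). wh (Suc (Suc t)) j)
      \<le> ?step * (\<Sum>j\<in>Lam Omega i (Suc t). wh (Suc t) j)"
    by (rule potential_step[OF assms(1,2)])
  also have "\<dots> \<le> ?step * (\<Sum>j\<in>Lam Omega i t. wh (Suc t) j)"
    using Suc.prems finite_Lam[OF assms(2)] weights_pos
    by (intro mult_left_mono sum_mono2) (auto simp: less_imp_le)
  also have "\<dots> \<le> ?step * (deg Omega i 0 * exp (- ew * Lh (Suc t) i + Suc t * ew\<^sup>2 / 8))"
    using Suc by (intro mult_left_mono) auto
  also have "\<dots> = deg Omega i 0 * exp (- ew * Lh (Suc (Suc t)) i + Suc (Suc t) * ew\<^sup>2 / 8)"
    by (simp add: L_hat_def sum.cl_ivl_Suc mult_exp_exp algebra_simps add_divide_distrib)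
  finally show ?case .
qed

lemma regret_bound:
  assumes "0 < ew" "i < N" "1 \<le> T"
    and shrinking: "\<And>s. s < T \<Longrightarrow> Lam Omega i (Suc s) \<subseteq> Lam Omega i s"
  shows "Lh T i - Min (Lb T ` Lam Omega i T) \<le> ln (deg Omega i 0) / ew + T * ew / 8"
proof -
  obtain T' where T: "T = Suc T'"
    using assms(3) by (cases T) auto
  have "Min (Lb T ` Lam Omega i T) \<in> Lb T ` Lam Omega i T"
    using finite_Lam[OF assms(2)] Lam_not_empty by (intro Min_in) auto
  then obtain j where j: "j \<in> Lam Omega i T" and j_min: "Lb T j = Min (Lb T ` Lam Omega i T)"
    by auto
  have "exp (- ew * Lb T j) = wh T j"
    by (simp add: w_hat_eq_exp_L_bar)
  also have "\<dots> \<le> (\<Sum>k\<in>Lam Omega i T'. wh T k)"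
    using j shrinking[of T'] T finite_Lam[OF assms(2)] weights_pos
    by (intro member_le_sum) (auto simp: less_imp_le)
  also have "\<dots> \<le> deg Omega i 0 * exp (- ew * Lh T i + T * ew\<^sup>2 / 8)"
    using potential_bound[of i T'] assms T by simp
  finally have "Lh T i - Lb T j \<le> ln (deg Omega i 0) / ew + T * ew / 8"
    using assms finite_Lam[OF assms(2)]
    by (intro exp_potential_imp_regret) (auto simp: deg_def card_gt_0_iff Lam_not_empty)
  then show ?thesis
    by (simp add: j_min)
qed

end

theorem corollary2:
  fixes N T :: nat
    and Acts Ys :: "'a::euclidean_space set"
    and l :: "'a \<Rightarrow> 'a \<Rightarrow> real"
    and y :: "nat \<Rightarrow> 'a"
    and f :: "nat \<Rightarrow> nat \<Rightarrow> 'a"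
    and Omega :: "nat \<Rightarrow> nat \<Rightarrow> nat set"
    and ea ew :: real
    and i :: nat
  assumes "N \<ge> 1" and "T \<ge> 1"
    and "convex Acts" and "convex Ys"
    and "\<And>a b. a \<in> Acts \<Longrightarrow> b \<in> Ys \<Longrightarrow> 0 \<le> l a b \<and> l a b \<le> 1"
    and "\<And>b. b \<in> Ys \<Longrightarrow> convex_on Acts (\<lambda>a. l a b)"
    and "\<And>t. t \<ge> 1 \<Longrightarrow> y t \<in> Ys"
    and "\<And>t j. t \<ge> 1 \<Longrightarrow> j < N \<Longrightarrow> f t j \<in> Acts"
    and "\<And>j t. j < N \<Longrightarrow> Omega j t \<subseteq> {..<N} - {j}"
    and "\<And>j k t. j < N \<Longrightarrow> k < N \<Longrightarrow> k \<in> Omega j t \<longleftrightarrow> j \<in> Omega k t"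
    and "i < N"
    and "deg Omega i 0 \<ge> 2"
    and "\<And>t. 1 \<le> t \<Longrightarrow> t \<le> T \<Longrightarrow> Omega i t \<subseteq> Omega i (t - 1)"
    and "ea > 0"
    and "ew = sqrt (8 * ln (real (deg Omega i 0)) / real T)"
  shows "L_hat Omega f y l ea ew T i
           - Min ((\<lambda>j. L_bar Omega f y l ea ew T j) ` Lam Omega i T)
         \<le> sqrt (real T / 2 * ln (real (deg Omega i 0)))"
proof -
  \<comment> \<open>Neither the symmetry of the graph, nor the convexity of Ys, nor the value of ea is needed.\<close>
  interpret d2eal Omega f y l ea ew N Acts Ys
    using assms(3,5-9) by unfold_locales auto
  have "2 \<le> real (deg Omega i 0)"
    using assms(12) by simp
  then have "0 < ln (real (deg Omega i 0))"
    by simp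
  then have "0 < ew"
    using assms(2,15) by simp
  have "Lam Omega i (Suc s) \<subseteq> Lam Omega i s" if "s < T" for s
    using assms(13)[of "Suc s"] that by (auto simp: Lam_def)
  then have "Lh T i - Min (Lb T ` Lam Omega i T) \<le> ln (deg Omega i 0) / ew + T * ew / 8"
    using \<open>0 < ew\<close> assms(2,11) by (intro regret_bound)
  also have "\<dots> = sqrt (real T / 2 * ln (real (deg Omega i 0)))"
    using \<open>0 < ln (real (deg Omega i 0))\<close> assms(2,15) by (simp add: tuned_rate_sum_eq)
  finally show ?thesis .
qed

end
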